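(* Let $G=(V,E)$ be a connected simple graph on $n$ vertices and let $c:E\to\mathbb{R}_{\ge 0}$ be any conductance function such that the edges of positive conductance form a connected spanning subgraph of $G$. Then the cyclic cover time of the associated random walk satisfies $CYC[G,c]\ge \frac{1}{2}n^2$.
   Context: For a vertex $v$, $N(v)$ is its set of neighbors. The random walk associated with $(G,c)$ is the Markov chain on $V$ which from the current vertex $v$ moves to $u\in N(v)$ with probability $\frac{c(v,u)}{\sum_{w\in N(v)}c(v,w)}$. The hitting time $H[u,v]$ is the expected number of steps for the walk started at $u$ to reach $v$. The cyclic cover time is $CYC[G,c]=\min_{\sigma}\left(\sum_{i=1}^{n-1}H[v_{\sigma(i)},v_{\sigma(i+1)}]+H[v_{\sigma(n)},v_{\sigma(1)}]\right)$, minimum over all orderings $\sigma$ of the vertices $v_1,\dots,v_n$. *)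

theory Defs
  imports "HOL-Analysis.Analysis"
begin

definition simple_graph :: "'a set \<Rightarrow> 'a set set \<Rightarrow> bool" where
  "simple_graph V E \<longleftrightarrow> finite V \<and> (\<forall>e\<in>E. \<exists>x y. x \<in> V \<and> y \<in> V \<and> x \<noteq> y \<and> e = {x, y})"

definition graph_connected :: "'a set \<Rightarrow> 'a set set \<Rightarrow> bool" where
  "graph_connected V E \<longleftrightarrow>
     (\<forall>x\<in>V. \<forall>y\<in>V. (x, y) \<in> {(a, b). a \<in> V \<and> b \<in> V \<and> {a, b} \<in> E}\<^sup>*)"

definition nbrs :: "'a set set \<Rightarrow> 'a \<Rightarrow> 'a set" where
  "nbrs E v = {u. {v, u} \<in> E}"

definition trans_prob :: "'a set set \<Rightarrow> ('a set \<Rightarrow> real) \<Rightarrow> 'a \<Rightarrow> 'a \<Rightarrow> real" where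
  "trans_prob E c v u =
     (if u \<in> nbrs E v then c {v, u} / (\<Sum>w\<in>nbrs E v. c {v, w}) else 0)"

text \<open>not_hit E c v t x is the probability that the walk started at x
  has not visited v at any of the times 0, ..., t, i.e. P_x(T_v > t),
  where T_v is the first time >= 0 at which the walk is at v.\<close>
fun not_hit :: "'a set set \<Rightarrow> ('a set \<Rightarrow> real) \<Rightarrow> 'a \<Rightarrow> nat \<Rightarrow> 'a \<Rightarrow> real" where
  "not_hit E c v 0 x = (if x = v then 0 else 1)"
| "not_hit E c v (Suc t) x =
     (if x = v then 0 else (\<Sum>y\<in>nbrs E x. trans_prob E c x y * not_hit E c v t y))"

text \<open>Hitting time H[u,v] = E_u[T_v] = sum_{t>=0} P_u(T_v > t), valued in [0, infinity].\<close>
definition hitting_time :: "'a set set \<Rightarrow> ('a set \<Rightarrow> real) \<Rightarrow> 'a \<Rightarrow> 'a \<Rightarrow> ennreal" where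
  "hitting_time E c u v = (\<Sum>t. ennreal (not_hit E c v t u))"

definition cyclic_cover_time :: "'a set \<Rightarrow> 'a set set \<Rightarrow> ('a set \<Rightarrow> real) \<Rightarrow> ennreal" where
  "cyclic_cover_time V E c =
     Min ((\<lambda>xs. \<Sum>i<length xs. hitting_time E c (xs ! i) (xs ! ((i + 1) mod length xs)))
            ` {xs. distinct xs \<and> set xs = V})"

end

theory Submission
  imports Defs "HOL-Combinatorics.Multiset_Permutations"
begin

text \<open>
  Write \<open>H v x\<close> for the expected hitting time of \<open>v\<close> from \<open>x\<close> (note the order of the arguments),
  \<open>d\<close> for the weighted degrees, \<open>C = \<Sum>x. d x\<close> and \<open>L\<close> for the weighted Laplacian.
  First-step analysis gives \<open>L (H v) = d - C \<delta>\<^sub>v\<close>. Self-adjointness of \<open>L\<close> then yields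
  \<open>T u - C H u v = T v - C H v u\<close> with \<open>T u = \<Sum>x. d x H u x\<close>, and comparing the energy of
  \<open>H u - H v\<close> with its star at \<open>u\<close> gives the commute time bound
  \<open>C (H u v + H v u) \<ge> C\<^sup>2 / d u\<close>. Combining the two, every step \<open>u \<rightarrow> v\<close> of a tour satisfies
  \<open>2 C H v u \<ge> C\<^sup>2 / (2 d u) + C\<^sup>2 / (2 d v) + T v - T u\<close>. Around the tour the \<open>T\<close> terms
  telescope, leaving a total of at least \<open>(C / 2) \<Sum>x. 1 / d x \<ge> n\<^sup>2 / 2\<close> by Cauchy-Schwarz.
  The hitting times are finite because the survival probabilities decay geometrically: from
  every vertex the target is reached with positive probability within a bounded number of steps.
\<close>

section \<open>Hitting times as potentials on a weighted graph\<close>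

lemma sum_lessThan_rotate:
  fixes F :: "nat \<Rightarrow> 'b::comm_monoid_add"
  assumes "n > 0"
  shows "(\<Sum>i<n. F ((i + 1) mod n)) = (\<Sum>i<n. F i)"
proof -
  obtain m where n: "n = Suc m" using assms by (cases n) auto
  have "(\<Sum>i<Suc m. F ((i + 1) mod Suc m)) = (\<Sum>i<m. F (Suc i)) + F 0"
    by (simp add: sum.lessThan_Suc)
  also have "\<dots> = (\<Sum>i<Suc m. F i)"
    by (subst sum.lessThan_Suc_shift) (simp add: add.commute)
  finally show ?thesis unfolding n .
qed

locale hitting_equations =
  fixes V :: "'a set" and w :: "'a \<Rightarrow> 'a \<Rightarrow> real" and d :: "'a \<Rightarrow> real"
    and H :: "'a \<Rightarrow> 'a \<Rightarrow> real"
  assumes finite_V: "finite V"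
    and w_sym: "w x y = w y x"
    and w_nonneg: "w x y \<ge> 0"
    and d_eq_sum_w: "x \<in> V \<Longrightarrow> d x = (\<Sum>y\<in>V. w x y)"
    and d_pos: "x \<in> V \<Longrightarrow> d x > 0"
    and H_self: "v \<in> V \<Longrightarrow> H v v = 0"
    and H_step: "v \<in> V \<Longrightarrow> x \<in> V \<Longrightarrow> x \<noteq> v \<Longrightarrow> d x * H v x = d x + (\<Sum>y\<in>V. w x y * H v y)"
begin

definition laplacian :: "('a \<Rightarrow> real) \<Rightarrow> 'a \<Rightarrow> real" where
  "laplacian f x = d x * f x - (\<Sum>y\<in>V. w x y * f y)"

definition total_degree :: real where
  "total_degree = (\<Sum>x\<in>V. d x)"

text \<open>\<open>total_degree\<close> times the expected hitting time of \<open>u\<close> from the stationary distribution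
  \<open>d / total_degree\<close>.\<close>
definition stationary_hitting :: "'a \<Rightarrow> real" where
  "stationary_hitting u = (\<Sum>x\<in>V. d x * H u x)"

lemma laplacian_eq_sum_diff: "x \<in> V \<Longrightarrow> laplacian f x = (\<Sum>y\<in>V. w x y * (f x - f y))"
  unfolding laplacian_def d_eq_sum_w
  by (simp add: sum_distrib_left sum_subtractf right_diff_distrib mult.commute)

lemma laplacian_diff: "laplacian (\<lambda>x. f x - g x) x = laplacian f x - laplacian g x"
  unfolding laplacian_def by (simp add: right_diff_distrib sum_subtractf)

lemma sum_laplacian: "(\<Sum>x\<in>V. laplacian f x) = 0"
proof -
  have "(\<Sum>x\<in>V. \<Sum>y\<in>V. w x y * f y) = (\<Sum>y\<in>V. \<Sum>x\<in>V. w x y * f y)"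
    by (rule sum.swap)
  also have "\<dots> = (\<Sum>y\<in>V. d y * f y)"
    using d_eq_sum_w by (simp add: sum_distrib_right[symmetric] w_sym)
  finally show ?thesis unfolding laplacian_def by (simp add: sum_subtractf)
qed

lemma laplacian_self_adjoint: "(\<Sum>x\<in>V. g x * laplacian f x) = (\<Sum>x\<in>V. f x * laplacian g x)"
proof -
  have expand: "(\<Sum>x\<in>V. h x * laplacian k x)
      = (\<Sum>x\<in>V. d x * h x * k x) - (\<Sum>x\<in>V. \<Sum>y\<in>V. w x y * h x * k y)" for h k
    unfolding laplacian_def
    by (simp add: right_diff_distrib sum_subtractf sum_distrib_left algebra_simps)
  have "(\<Sum>x\<in>V. \<Sum>y\<in>V. w x y * g x * f y) = (\<Sum>y\<in>V. \<Sum>x\<in>V. w x y * g x * f y)"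
    by (rule sum.swap)
  also have "\<dots> = (\<Sum>x\<in>V. \<Sum>y\<in>V. w x y * f x * g y)"
    by (intro sum.cong refl) (simp add: w_sym algebra_simps)
  finally show ?thesis unfolding expand by (simp add: algebra_simps)
qed

lemma dirichlet_form:
  "2 * (\<Sum>x\<in>V. f x * laplacian f x) = (\<Sum>x\<in>V. \<Sum>y\<in>V. w x y * (f x - f y)\<^sup>2)"
proof -
  have "(\<Sum>x\<in>V. f x * laplacian f x) = (\<Sum>x\<in>V. \<Sum>y\<in>V. w x y * f x * (f x - f y))"
    using laplacian_eq_sum_diff by (simp add: sum_distrib_left algebra_simps)
  moreover have "\<dots> = (\<Sum>y\<in>V. \<Sum>x\<in>V. w x y * f x * (f x - f y))"
    by (rule sum.swap)
  moreover have "\<dots> = (\<Sum>x\<in>V. \<Sum>y\<in>V. w x y * f y * (f y - f x))"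
    by (intro sum.cong refl) (simp add: w_sym)
  ultimately have "2 * (\<Sum>x\<in>V. f x * laplacian f x)
      = (\<Sum>x\<in>V. \<Sum>y\<in>V. w x y * f x * (f x - f y) + w x y * f y * (f y - f x))"
    by (simp add: sum.distrib)
  also have "\<dots> = (\<Sum>x\<in>V. \<Sum>y\<in>V. w x y * (f x - f y)\<^sup>2)"
    by (intro sum.cong refl) (simp add: power2_eq_square algebra_simps)
  finally show ?thesis .
qed

text \<open>The row and the column of \<open>u\<close> in the double sum of the Dirichlet form coincide
  and overlap only in the vanishing diagonal term.\<close>
lemma dirichlet_form_ge_star:
  assumes u: "u \<in> V"
  shows "(\<Sum>x\<in>V. f x * laplacian f x) \<ge> (\<Sum>y\<in>V. w u y * (f u - f y)\<^sup>2)"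
proof -
  define g where "g x y = w x y * (f x - f y)\<^sup>2" for x y
  have g_nonneg: "g x y \<ge> 0" for x y
    unfolding g_def using w_nonneg by simp
  have "(\<Sum>x\<in>V. \<Sum>y\<in>V. g x y) = (\<Sum>y\<in>V. g u y) + (\<Sum>x\<in>V-{u}. \<Sum>y\<in>V. g x y)"
    using sum.remove[OF finite_V u] by blast
  moreover have "(\<Sum>x\<in>V-{u}. g x u) \<le> (\<Sum>x\<in>V-{u}. \<Sum>y\<in>V. g x y)"
    using finite_V u g_nonneg by (intro sum_mono member_le_sum) auto
  moreover have "(\<Sum>x\<in>V-{u}. g x u) = (\<Sum>y\<in>V. g u y)"
    using sum.remove[OF finite_V u, of "\<lambda>x. g x u"] by (simp add: g_def w_sym power2_commute)
  ultimately have "2 * (\<Sum>y\<in>V. g u y) \<le> (\<Sum>x\<in>V. \<Sum>y\<in>V. g x y)"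
    by linarith
  then show ?thesis
    using dirichlet_form[of f] unfolding g_def by simp
qed

lemma weighted_cauchy_schwarz:
  assumes u: "u \<in> V"
  shows "(\<Sum>y\<in>V. w u y * a y)\<^sup>2 \<le> d u * (\<Sum>y\<in>V. w u y * (a y)\<^sup>2)"
proof -
  define S where "S = (\<Sum>y\<in>V. w u y * a y)"
  define m where "m = S / d u"
  have du: "d u > 0" using d_pos u .
  have "0 \<le> (\<Sum>y\<in>V. w u y * (a y - m)\<^sup>2)"
    using w_nonneg by (intro sum_nonneg) simp
  also have "\<dots> = (\<Sum>y\<in>V. w u y * (a y)\<^sup>2) - 2 * m * S + m\<^sup>2 * d u"
    unfolding S_def d_eq_sum_w[OF u]
    by (simp add: power2_eq_square sum_subtractf sum.distrib sum_distrib_left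
        sum_distrib_right algebra_simps)
  also have "\<dots> = (\<Sum>y\<in>V. w u y * (a y)\<^sup>2) - S\<^sup>2 / d u"
    unfolding m_def using du by (simp add: power2_eq_square field_simps)
  finally show ?thesis unfolding S_def[symmetric] using du by (simp add: field_simps)
qed

lemma total_degree_pos: "V \<noteq> {} \<Longrightarrow> total_degree > 0"
  unfolding total_degree_def using finite_V d_pos by (intro sum_pos) auto

lemma total_degree_mult_sum_inverse_ge:
  "total_degree * (\<Sum>x\<in>V. 1 / d x) \<ge> real (card V) ^ 2"
proof -
  have "2 \<le> d x / d y + d y / d x" if "x \<in> V" "y \<in> V" for x y
  proof -
    have pos: "d x > 0" "d y > 0" using d_pos that by auto
    have "0 \<le> (d x - d y)\<^sup>2 / (d x * d y)" using pos by simp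
    also have "\<dots> = d x / d y + d y / d x - 2"
      using pos by (simp add: field_simps power2_eq_square)
    finally show ?thesis by simp
  qed
  then have "(\<Sum>x\<in>V. \<Sum>y\<in>V. (2::real)) \<le> (\<Sum>x\<in>V. \<Sum>y\<in>V. d x / d y + d y / d x)"
    by (intro sum_mono) auto
  also have "\<dots> = 2 * (\<Sum>x\<in>V. \<Sum>y\<in>V. d x / d y)"
    using sum.swap[of "\<lambda>x y. d x / d y" V V] by (simp add: sum.distrib)
  also have "(\<Sum>x\<in>V. \<Sum>y\<in>V. d x / d y) = total_degree * (\<Sum>x\<in>V. 1 / d x)"
    unfolding total_degree_def sum_product by simp
  finally show ?thesis by (simp add: power2_eq_square)
qed

lemma laplacian_H:
  assumes "v \<in> V" "x \<in> V"
  shows "laplacian (H v) x = d x - (if x = v then total_degree else 0)"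
proof (cases "x = v")
  case True
  have "0 = laplacian (H v) v + (\<Sum>y\<in>V-{v}. laplacian (H v) y)"
    using sum_laplacian[of "H v"] finite_V assms by (simp add: sum.remove)
  also have "(\<Sum>y\<in>V-{v}. laplacian (H v) y) = (\<Sum>y\<in>V-{v}. d y)"
    using H_step assms(1) by (intro sum.cong) (auto simp: laplacian_def)
  also have "\<dots> = total_degree - d v"
    unfolding total_degree_def using finite_V assms by (simp add: sum_diff1)
  finally show ?thesis using True by simp
next
  case False
  then show ?thesis using H_step assms by (simp add: laplacian_def)
qed

lemma sum_H_laplacian_H:
  assumes "a \<in> V" "b \<in> V"
  shows "(\<Sum>x\<in>V. H a x * laplacian (H b) x) = stationary_hitting a - total_degree * H a b"
proof -
  have "(\<Sum>x\<in>V. H a x * laplacian (H b) x)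
      = (\<Sum>x\<in>V. d x * H a x - (if x = b then total_degree * H a b else 0))"
    by (intro sum.cong refl) (auto simp: laplacian_H[OF assms(2)] algebra_simps)
  also have "\<dots> = stationary_hitting a - total_degree * H a b"
    unfolding stationary_hitting_def using assms finite_V by (simp add: sum_subtractf)
  finally show ?thesis .
qed

lemma stationary_hitting_exchange:
  assumes "u \<in> V" "v \<in> V"
  shows "stationary_hitting u - total_degree * H u v = stationary_hitting v - total_degree * H v u"
  using laplacian_self_adjoint[of "H u" "H v"] sum_H_laplacian_H assms by simp

text \<open>The potential \<open>H u - H v\<close> has Laplacian \<open>total_degree\<close> times \<open>\<delta>\<^sub>v - \<delta>\<^sub>u\<close>, so its energy
  is \<open>total_degree\<close> times the commute time, while its star at \<open>u\<close> carries a flow of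
  \<open>total_degree\<close>, which by Cauchy-Schwarz costs at least \<open>total_degree\<^sup>2 / d u\<close>.\<close>
lemma commute_time_ge:
  assumes u: "u \<in> V" and v: "v \<in> V" and "u \<noteq> v"
  shows "total_degree * (H u v + H v u) \<ge> total_degree\<^sup>2 / d u"
proof -
  define f where "f x = H u x - H v x" for x
  have laplacian_f:
      "laplacian f x = (if x = v then total_degree else 0) - (if x = u then total_degree else 0)"
    if "x \<in> V" for x
    unfolding f_def laplacian_diff using laplacian_H[OF u that] laplacian_H[OF v that] by simp
  define R where "R = (\<Sum>y\<in>V. w u y * (f u - f y)\<^sup>2)"
  have "(\<Sum>y\<in>V. w u y * (f u - f y)) = - total_degree"
    using laplacian_f[OF u] laplacian_eq_sum_diff[OF u] \<open>u \<noteq> v\<close> by simp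
  then have "total_degree\<^sup>2 \<le> d u * R"
    using weighted_cauchy_schwarz[OF u, of "\<lambda>y. f u - f y"] unfolding R_def by simp
  then have "total_degree\<^sup>2 / d u \<le> R"
    using d_pos[OF u] by (simp add: divide_le_eq mult.commute)
  also have "R \<le> (\<Sum>x\<in>V. f x * laplacian f x)"
    unfolding R_def by (rule dirichlet_form_ge_star[OF u])
  also have "\<dots> = (\<Sum>x\<in>V. (if x = v then total_degree * f v else 0)
      - (if x = u then total_degree * f u else 0))"
    by (intro sum.cong refl) (auto simp: laplacian_f algebra_simps)
  also have "\<dots> = total_degree * (H u v + H v u)"
    using u v finite_V H_self by (simp add: sum_subtractf f_def algebra_simps)
  finally show ?thesis .
qed

lemma hitting_step_ge:
  assumes "u \<in> V" "v \<in> V" "u \<noteq> v"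
  shows "2 * total_degree * H v u \<ge> total_degree\<^sup>2 / (2 * d u) + total_degree\<^sup>2 / (2 * d v)
    + stationary_hitting v - stationary_hitting u"
  using stationary_hitting_exchange[of u v] commute_time_ge[of u v] commute_time_ge[of v u] assms
  by (simp add: field_simps)

lemma cyclic_hitting_sum_ge:
  assumes "distinct xs" "set xs = V" "length xs \<ge> 2"
  shows "(\<Sum>i<length xs. H (xs ! ((i + 1) mod length xs)) (xs ! i)) \<ge> real (card V) ^ 2 / 2"
proof -
  define n where "n = length xs"
  define succ where "succ i = (i + 1) mod n" for i
  define G where "G x = total_degree\<^sup>2 / (2 * d x)" for x
  define T where "T = stationary_hitting"
  have n: "n \<ge> 2" using assms(3) unfolding n_def .
  have step: "2 * total_degree * H (xs ! succ i) (xs ! i)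
      \<ge> G (xs ! i) + G (xs ! succ i) + T (xs ! succ i) - T (xs ! i)" if "i < n" for i
  proof -
    have "succ i < n" "succ i \<noteq> i"
      using n that unfolding succ_def by (auto simp: mod_if)
    moreover have "xs ! i \<in> V" "xs ! succ i \<in> V"
      using \<open>succ i < n\<close> that assms(2) unfolding n_def by auto
    ultimately show ?thesis
      unfolding G_def T_def using assms(1) that
      by (intro hitting_step_ge) (auto simp: n_def nth_eq_iff_index_eq)
  qed
  have rotate: "(\<Sum>i<n. F (xs ! succ i)) = (\<Sum>i<n. F (xs ! i))" for F :: "'a \<Rightarrow> real"
    unfolding succ_def using sum_lessThan_rotate[of n "\<lambda>i. F (xs ! i)"] n by simp
  have "(\<Sum>i<n. G (xs ! i)) = (\<Sum>x\<in>V. G x)"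
    using sum.distinct_set_conv_list[OF assms(1), of G] assms(2)
    by (simp add: n_def sum_list_sum_nth atLeast0LessThan)
  also have "2 * \<dots> = total_degree * (total_degree * (\<Sum>x\<in>V. 1 / d x))"
    unfolding G_def sum_distrib_left by (simp add: power2_eq_square)
  finally have "total_degree * (total_degree * (\<Sum>x\<in>V. 1 / d x)) = 2 * (\<Sum>i<n. G (xs ! i))"
    by simp
  also have "\<dots> = (\<Sum>i<n. G (xs ! i) + G (xs ! succ i) + T (xs ! succ i) - T (xs ! i))"
    using rotate[of G] rotate[of T] by (simp add: sum.distrib sum_subtractf)
  also have "\<dots> \<le> (\<Sum>i<n. 2 * total_degree * H (xs ! succ i) (xs ! i))"
    using step by (intro sum_mono) auto
  finally have "total_degree * (total_degree * (\<Sum>x\<in>V. 1 / d x))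
      \<le> total_degree * (2 * (\<Sum>i<n. H (xs ! succ i) (xs ! i)))"
    by (simp add: sum_distrib_left mult_ac)
  moreover have "total_degree > 0"
    using assms(2,3) by (intro total_degree_pos) auto
  ultimately have "2 * (\<Sum>i<n. H (xs ! succ i) (xs ! i)) \<ge> total_degree * (\<Sum>x\<in>V. 1 / d x)"
    by simp
  then show ?thesis
    using total_degree_mult_sum_inverse_ge unfolding n_def succ_def by simp
qed

end

section \<open>The random walk with conductances\<close>

locale conductance_walk =
  fixes V :: "'a set" and E :: "'a set set" and c :: "'a set \<Rightarrow> real"
  assumes simple: "simple_graph V E"
    and two_vertices: "card V \<ge> 2"
    and c_nonneg: "\<forall>e\<in>E. c e \<ge> 0"
    and positive_connected: "graph_connected V {e\<in>E. c e > 0}"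
begin

definition weight :: "'a \<Rightarrow> 'a \<Rightarrow> real" where
  "weight x y = (if {x, y} \<in> E then c {x, y} else 0)"

definition degree :: "'a \<Rightarrow> real" where
  "degree x = (\<Sum>y\<in>nbrs E x. c {x, y})"

abbreviation positive_edges :: "('a \<times> 'a) set" where
  "positive_edges \<equiv> {(a, b). a \<in> V \<and> b \<in> V \<and> {a, b} \<in> {e\<in>E. c e > 0}}"

lemma finite_V: "finite V"
  using simple unfolding simple_graph_def by auto

lemma V_nonempty: "V \<noteq> {}"
  using two_vertices by auto

lemma edge_endpoints:
  assumes "{x, y} \<in> E"
  shows "x \<in> V \<and> y \<in> V \<and> x \<noteq> y"
proof -
  obtain a b where "a \<in> V" "b \<in> V" "a \<noteq> b" "{x, y} = {a, b}"
    using simple assms unfolding simple_graph_def by blast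
  then show ?thesis unfolding doubleton_eq_iff by auto
qed

lemma nbrs_subset: "nbrs E x \<subseteq> V"
  using edge_endpoints unfolding nbrs_def by auto

lemma finite_nbrs: "finite (nbrs E x)"
  using nbrs_subset finite_V by (rule finite_subset)

lemma nbrs_outside: "x \<notin> V \<Longrightarrow> nbrs E x = {}"
  using edge_endpoints unfolding nbrs_def by auto

lemma weight_sym: "weight x y = weight y x"
  unfolding weight_def by (simp add: insert_commute)

lemma weight_nonneg: "weight x y \<ge> 0"
  unfolding weight_def using c_nonneg by auto

lemma sum_nbrs_eq_sum_weight: "(\<Sum>y\<in>nbrs E x. c {x, y} * f y) = (\<Sum>y\<in>V. weight x y * f y)"
proof -
  have "(\<Sum>y\<in>V. weight x y * f y) = (\<Sum>y\<in>nbrs E x. weight x y * f y)"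
    by (rule sum.mono_neutral_right[OF finite_V nbrs_subset]) (auto simp: weight_def nbrs_def)
  also have "\<dots> = (\<Sum>y\<in>nbrs E x. c {x, y} * f y)"
    by (rule sum.cong) (auto simp: weight_def nbrs_def)
  finally show ?thesis by simp
qed

lemma degree_eq_sum_weight: "degree x = (\<Sum>y\<in>V. weight x y)"
  using sum_nbrs_eq_sum_weight[of x "\<lambda>_. 1"] unfolding degree_def by simp

lemma degree_pos:
  assumes "x \<in> V"
  shows "degree x > 0"
proof -
  have "\<not> V \<subseteq> {x}"
    using two_vertices card_mono[of "{x}" V] by auto
  then obtain y where y: "y \<in> V" "y \<noteq> x"
    by blast
  have "(x, y) \<in> positive_edges\<^sup>*"
    using positive_connected assms y unfolding graph_connected_def by blast
  then have "x \<noteq> y \<longrightarrow> (\<exists>z. (x, z) \<in> positive_edges)"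
    by (induction rule: converse_rtrancl_induct) blast+
  then obtain z where "z \<in> nbrs E x" "c {x, z} > 0"
    using y(2) by (auto simp: nbrs_def)
  moreover have "(\<Sum>y\<in>nbrs E x - {z}. c {x, y}) \<ge> 0"
    using c_nonneg by (intro sum_nonneg) (auto simp: nbrs_def)
  ultimately show ?thesis
    unfolding degree_def using finite_nbrs by (simp add: sum.remove)
qed

lemma trans_prob_eq: "trans_prob E c x y = (if y \<in> nbrs E x then c {x, y} / degree x else 0)"
  unfolding trans_prob_def degree_def by simp

lemma trans_prob_nonneg: "trans_prob E c x y \<ge> 0"
proof (cases "y \<in> nbrs E x")
  case True
  then have "x \<in> V" "c {x, y} \<ge> 0"
    using nbrs_outside c_nonneg by (auto simp: nbrs_def)
  then show ?thesis
    using True degree_pos[OF \<open>x \<in> V\<close>] unfolding trans_prob_eq by simp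
qed (simp add: trans_prob_eq)

lemma sum_trans_prob_mult:
  "(\<Sum>y\<in>nbrs E x. trans_prob E c x y * f y) = (\<Sum>y\<in>V. weight x y * f y) / degree x"
  unfolding trans_prob_eq sum_divide_distrib sum_nbrs_eq_sum_weight[symmetric]
  by (rule sum.cong) simp_all

lemma sum_trans_prob: "x \<in> V \<Longrightarrow> (\<Sum>y\<in>nbrs E x. trans_prob E c x y) = 1"
  using sum_trans_prob_mult[of x "\<lambda>_. 1"] degree_eq_sum_weight[of x] degree_pos[of x] by simp

lemma sum_trans_prob_le_1: "(\<Sum>y\<in>nbrs E x. trans_prob E c x y) \<le> 1"
  using sum_trans_prob[of x] nbrs_outside[of x] by (cases "x \<in> V") auto

abbreviation survival :: "'a \<Rightarrow> nat \<Rightarrow> 'a \<Rightarrow> real" where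
  "survival v t x \<equiv> not_hit E c v t x"

lemma survival_target: "survival v t v = 0"
  by (cases t) auto

lemma survival_bounds: "0 \<le> survival v t x \<and> survival v t x \<le> 1"
proof (induction t arbitrary: x)
  case (Suc t)
  have "0 \<le> (\<Sum>y\<in>nbrs E x. trans_prob E c x y * survival v t y)"
    using Suc trans_prob_nonneg by (intro sum_nonneg mult_nonneg_nonneg) auto
  moreover have "(\<Sum>y\<in>nbrs E x. trans_prob E c x y * survival v t y)
      \<le> (\<Sum>y\<in>nbrs E x. trans_prob E c x y)"
    using Suc trans_prob_nonneg by (intro sum_mono mult_right_le_one_le) auto
  ultimately show ?case
    using sum_trans_prob_le_1[of x] by simp
qed simp

definition max_survival :: "'a \<Rightarrow> nat \<Rightarrow> real" where
  "max_survival v t = Max (survival v t ` V)"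

lemma survival_le_max_survival: "x \<in> V \<Longrightarrow> survival v t x \<le> max_survival v t"
  unfolding max_survival_def using finite_V by (intro Max_ge) auto

lemma max_survival_bounds: "0 \<le> max_survival v t \<and> max_survival v t \<le> 1"
proof -
  obtain x where "x \<in> V"
    using V_nonempty by blast
  then have "0 \<le> max_survival v t"
    using survival_le_max_survival[of x v t] survival_bounds[of v t x] by linarith
  moreover have "max_survival v t \<le> 1"
    unfolding max_survival_def using finite_V \<open>x \<in> V\<close> survival_bounds
    by (subst Max_le_iff) auto
  ultimately show ?thesis by simp
qed

text \<open>Markov property: to survive \<open>s + t\<close> steps, survive \<open>s\<close> steps and then \<open>t\<close> more.\<close>
lemma survival_add_le: "x \<in> V \<Longrightarrow> survival v (s + t) x \<le> survival v s x * max_survival v t"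
proof (induction s arbitrary: x)
  case 0
  then show ?case
    using survival_le_max_survival[of x v t] survival_target[of v t] by (cases "x = v") auto
next
  case (Suc s)
  show ?case
  proof (cases "x = v")
    case False
    have "survival v (Suc s + t) x = (\<Sum>y\<in>nbrs E x. trans_prob E c x y * survival v (s + t) y)"
      using False by simp
    also have "\<dots> \<le> (\<Sum>y\<in>nbrs E x. trans_prob E c x y * (survival v s y * max_survival v t))"
      using Suc.IH nbrs_subset trans_prob_nonneg by (intro sum_mono mult_left_mono) auto
    also have "\<dots> = survival v (Suc s) x * max_survival v t"
      using False by (simp add: sum_distrib_right mult.assoc)
    finally show ?thesis .
  qed (simp add: survival_target)
qed

lemma survival_antimono: "s \<le> t \<Longrightarrow> survival v t x \<le> survival v s x"
proof (induction t rule: dec_induct)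
  case (step t)
  have "survival v (Suc t) x \<le> survival v t x"
  proof (cases "x \<in> V")
    case True
    have "survival v (t + 1) x \<le> survival v t x * max_survival v 1"
      by (rule survival_add_le[OF True])
    also have "\<dots> \<le> survival v t x"
      using max_survival_bounds[of v 1] survival_bounds[of v t x] by (simp add: mult_left_le)
    finally show ?thesis by simp
  next
    case False
    then show ?thesis
      using nbrs_outside survival_bounds[of v t x] by (cases "x = v") auto
  qed
  with step.IH show ?case by linarith
qed simp

lemma survival_eventually_lt_1:
  assumes "v \<in> V" "x \<in> V"
  shows "\<exists>k. survival v k x < 1"
proof -
  have "(x, v) \<in> positive_edges\<^sup>*"
    using positive_connected assms unfolding graph_connected_def by blast
  then show ?thesis
  proof (induction rule: converse_rtrancl_induct)
    case base
    then show ?case using survival_target by auto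
  next
    case (step a b)
    then obtain k where k: "survival v k b < 1" by blast
    show ?case
    proof (cases "a = v")
      case True
      then show ?thesis using survival_target by auto
    next
      case False
      define p where "p = trans_prob E c a b"
      have a: "a \<in> V" and b: "b \<in> nbrs E a" and "c {a, b} > 0"
        using step.hyps(1) by (auto simp: nbrs_def)
      then have "p > 0"
        using degree_pos[OF a] unfolding p_def trans_prob_eq by simp
      have "survival v (Suc k) a = p * survival v k b
          + (\<Sum>y\<in>nbrs E a - {b}. trans_prob E c a y * survival v k y)"
        using False finite_nbrs b by (simp add: sum.remove p_def)
      also have "(\<Sum>y\<in>nbrs E a - {b}. trans_prob E c a y * survival v k y)
          \<le> (\<Sum>y\<in>nbrs E a - {b}. trans_prob E c a y)"
        using trans_prob_nonneg survival_bounds by (intro sum_mono mult_right_le_one_le) auto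
      also have "\<dots> = 1 - p"
        using sum_trans_prob[OF a] finite_nbrs b by (simp add: sum.remove p_def)
      finally have "survival v (Suc k) a \<le> p * survival v k b + (1 - p)" by simp
      moreover have "p * survival v k b < p"
        using \<open>p > 0\<close> k by simp
      ultimately show ?thesis by (intro exI[of _ "Suc k"]) linarith
    qed
  qed
qed

lemma max_survival_eventually_lt_1:
  assumes "v \<in> V"
  shows "\<exists>m>0. max_survival v m < 1"
proof -
  obtain K where K: "\<forall>x\<in>V. survival v (K x) x < 1"
    using survival_eventually_lt_1[OF assms] by metis
  define m where "m = Suc (Max (K ` V))"
  have "survival v m x < 1" if "x \<in> V" for x
  proof -
    have "K x \<le> m"
      unfolding m_def using finite_V that by (simp add: le_SucI)
    then have "survival v m x \<le> survival v (K x) x"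
      by (rule survival_antimono)
    with K that show ?thesis by fastforce
  qed
  moreover have "max_survival v m \<in> survival v m ` V"
    unfolding max_survival_def using finite_V V_nonempty by (intro Max_in) auto
  ultimately have "max_survival v m < 1"
    by auto
  moreover have "m > 0"
    unfolding m_def by simp
  ultimately show ?thesis
    by blast
qed

lemma survival_geometric_decay:
  "x \<in> V \<Longrightarrow> survival v (k * m + r) x \<le> max_survival v m ^ k"
proof (induction k)
  case 0
  then show ?case using survival_bounds[of v r x] by simp
next
  case (Suc k)
  have "survival v ((k * m + r) + m) x \<le> survival v (k * m + r) x * max_survival v m"
    by (rule survival_add_le[OF Suc.prems])
  also have "\<dots> \<le> max_survival v m ^ k * max_survival v m"
    using Suc max_survival_bounds[of v m] by (intro mult_right_mono) auto
  finally show ?case by (simp add: algebra_simps)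
qed

lemma summable_survival:
  assumes "v \<in> V" "x \<in> V"
  shows "summable (\<lambda>t. survival v t x)"
proof -
  obtain m where m: "m > 0" "max_survival v m < 1"
    using max_survival_eventually_lt_1[OF assms(1)] by blast
  define b where "b = max (max_survival v m) (1/2)"
  have b: "0 < b" "b < 1" "max_survival v m \<le> b"
    using m unfolding b_def by auto
  define r where "r = root m b"
  have r: "0 < r" "r < 1" "r ^ m = b"
    using b m unfolding r_def by (auto simp: real_root_gt_zero)
  have bound: "survival v t x \<le> r ^ t / r ^ m" for t
  proof -
    have "survival v t x = survival v ((t div m) * m + t mod m) x" by simp
    also have "\<dots> \<le> max_survival v m ^ (t div m)"
      by (rule survival_geometric_decay[OF assms(2)])
    also have "\<dots> \<le> b ^ (t div m)"
      using b max_survival_bounds[of v m] by (intro power_mono) auto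
    also have "\<dots> = r ^ (m * (t div m))"
      using r by (simp add: power_mult)
    also have "\<dots> \<le> r ^ t / r ^ m"
    proof -
      have "t \<le> m * (t div m) + m"
        using m by (metis add_le_cancel_left div_mult_mod_eq less_imp_le mod_less_divisor mult.commute)
      then have "r ^ (m * (t div m) + m) \<le> r ^ t"
        using r by (intro power_decreasing) auto
      then show ?thesis
        using r b by (simp add: power_add pos_le_divide_eq mult.commute)
    qed
    finally show ?thesis .
  qed
  have "summable (\<lambda>t. r ^ t / r ^ m)"
    using r by (intro summable_divide summable_geometric) auto
  then show ?thesis
    by (rule summable_comparison_test'[where N=0]) (use bound survival_bounds in auto)
qed

definition expected_hit :: "'a \<Rightarrow> 'a \<Rightarrow> real" where
  "expected_hit v x = (\<Sum>t. survival v t x)"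

lemma hitting_time_eq_expected_hit:
  "v \<in> V \<Longrightarrow> x \<in> V \<Longrightarrow> hitting_time E c x v = ennreal (expected_hit v x)"
  unfolding hitting_time_def expected_hit_def
  by (rule suminf_ennreal2) (use survival_bounds summable_survival in auto)

lemma expected_hit_nonneg: "v \<in> V \<Longrightarrow> x \<in> V \<Longrightarrow> expected_hit v x \<ge> 0"
  unfolding expected_hit_def using summable_survival survival_bounds by (intro suminf_nonneg) auto

lemma expected_hit_step:
  assumes v: "v \<in> V" and x: "x \<in> V" and "x \<noteq> v"
  shows "degree x * expected_hit v x = degree x + (\<Sum>y\<in>V. weight x y * expected_hit v y)"
proof -
  have "expected_hit v x - 1 = (\<Sum>t. survival v (Suc t) x)"
    using suminf_split_head[OF summable_survival[OF v x]] \<open>x \<noteq> v\<close>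
    unfolding expected_hit_def by simp
  also have "\<dots> = (\<Sum>t. \<Sum>y\<in>nbrs E x. trans_prob E c x y * survival v t y)"
    using \<open>x \<noteq> v\<close> by simp
  also have "\<dots> = (\<Sum>y\<in>nbrs E x. \<Sum>t. trans_prob E c x y * survival v t y)"
    by (rule suminf_sum) (use summable_survival[OF v] nbrs_subset in \<open>auto intro: summable_mult\<close>)
  also have "\<dots> = (\<Sum>y\<in>nbrs E x. trans_prob E c x y * expected_hit v y)"
    unfolding expected_hit_def using summable_survival[OF v] nbrs_subset
    by (intro sum.cong refl suminf_mult) auto
  also have "\<dots> = (\<Sum>y\<in>V. weight x y * expected_hit v y) / degree x"
    by (rule sum_trans_prob_mult)
  finally show ?thesis
    using degree_pos[OF x] by (simp add: field_simps)
qed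

lemma hitting_equations: "hitting_equations V weight degree expected_hit"
proof
  show "expected_hit v v = 0" for v
    unfolding expected_hit_def by (simp add: survival_target)
qed (use finite_V weight_sym weight_nonneg degree_eq_sum_weight degree_pos expected_hit_step in auto)

lemma cyclic_hitting_time_ge:
  assumes "distinct xs" "set xs = V"
  shows "ennreal (real (card V) ^ 2 / 2)
    \<le> (\<Sum>i<length xs. hitting_time E c (xs ! i) (xs ! ((i + 1) mod length xs)))"
proof -
  interpret network: hitting_equations V weight degree expected_hit
    by (rule hitting_equations)
  define succ where "succ i = (i + 1) mod length xs" for i
  have "length xs \<ge> 2"
    using assms two_vertices distinct_card by metis
  then have "succ i < length xs" for i
    unfolding succ_def by (intro mod_less_divisor) linarith
  then have in_V: "xs ! i \<in> V" "xs ! succ i \<in> V" if "i < length xs" for i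
    using that assms(2) by auto
  have "(\<Sum>i<length xs. hitting_time E c (xs ! i) (xs ! succ i))
      = (\<Sum>i<length xs. ennreal (expected_hit (xs ! succ i) (xs ! i)))"
    using in_V hitting_time_eq_expected_hit by simp
  also have "\<dots> = ennreal (\<Sum>i<length xs. expected_hit (xs ! succ i) (xs ! i))"
    using in_V expected_hit_nonneg by (intro sum_ennreal) auto
  finally have "(\<Sum>i<length xs. hitting_time E c (xs ! i) (xs ! succ i))
      = ennreal (\<Sum>i<length xs. expected_hit (xs ! succ i) (xs ! i))" .
  moreover have "real (card V) ^ 2 / 2 \<le> (\<Sum>i<length xs. expected_hit (xs ! succ i) (xs ! i))"
    unfolding succ_def using network.cyclic_hitting_sum_ge assms \<open>length xs \<ge> 2\<close> by blast
  ultimately show ?thesis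
    unfolding succ_def by (simp add: ennreal_leI)
qed

end

theorem proposition1:
  fixes V :: "'a set" and E :: "'a set set" and c :: "'a set \<Rightarrow> real"
  assumes "simple_graph V E"
    and "graph_connected V E"
    and "card V \<ge> 2"
    and "\<forall>e\<in>E. c e \<ge> 0"
    and "graph_connected V {e\<in>E. c e > 0}"
  shows "cyclic_cover_time V E c \<ge> ennreal (real (card V) ^ 2 / 2)"
proof -
  interpret conductance_walk V E c
    using assms(1,3-5) by unfold_locales
  have orderings: "{xs. distinct xs \<and> set xs = V} = permutations_of_set V"
    by (auto simp: permutations_of_set_def)
  show ?thesis
    unfolding cyclic_cover_time_def orderings
    by (subst Min_ge_iff) (use finite_V cyclic_hitting_time_ge in \<open>auto dest: permutations_of_setD\<close>)
qed

end
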